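(* Let $R$ be a commutative ring, $f\in R[[X]]$, and $S=R[[X]]/(f)$. Then every Cauchy sequence in $S$ for the $f_0S$-adic topology converges in $S$. Moreover, if $f_0$ is a nonzerodivisor in $R$ or $R$ is Noetherian, then $S$ is complete with respect to $f_0S$ (i.e. the natural map $S\to\varprojlim S/f_0^nS$ is an isomorphism), and the canonical $R[[X]]$-homomorphism $R[[X]]/(f)\to\widehat{R}_{(f_0)}[[X]]/(f)$ is an isomorphism.
   Context: $f_0$ is the constant term of $f$; $\widehat{R}_{(f_0)}$ is the $f_0$-adic completion of $R$. *)

theory Defs
  imports "HOL-Computational_Algebra.Formal_Power_Series" "HOL-Library.Function_Algebras"
begin

text \<open>For g, h in R[[X]]: their images in S = R[[X]]/(f) are congruent modulo f0^k S,
  i.e. g - h lies in the ideal f0^k R[[X]] + f R[[X]].\<close>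
definition fadic_cong :: "'a::comm_ring_1 fps \<Rightarrow> nat \<Rightarrow> 'a fps \<Rightarrow> 'a fps \<Rightarrow> bool" where
  "fadic_cong f k g h \<longleftrightarrow> (\<exists>a b. g - h = fps_const ((fps_nth f 0) ^ k) * a + f * b)"

definition fadic_Cauchy :: "'a::comm_ring_1 fps \<Rightarrow> (nat \<Rightarrow> 'a fps) \<Rightarrow> bool" where
  "fadic_Cauchy f s \<longleftrightarrow> (\<forall>k. \<exists>N. \<forall>m\<ge>N. \<forall>n\<ge>N. fadic_cong f k (s m) (s n))"

definition fadic_converges :: "'a::comm_ring_1 fps \<Rightarrow> (nat \<Rightarrow> 'a fps) \<Rightarrow> bool" where
  "fadic_converges f s \<longleftrightarrow> (\<exists>l. \<forall>k. \<exists>N. \<forall>n\<ge>N. fadic_cong f k (s n) l)"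

text \<open>S is complete w.r.t. f0 S: the natural map S \<rightarrow> lim S/f0^n S is injective
  (first conjunct) and surjective (second conjunct; a compatible system is given by
  representatives a n of its components in S/f0^n S).\<close>
definition fadic_complete :: "'a::comm_ring_1 fps \<Rightarrow> bool" where
  "fadic_complete f \<longleftrightarrow>
     (\<forall>g. (\<forall>n. fadic_cong f n g 0) \<longrightarrow> f dvd g) \<and>
     (\<forall>a. (\<forall>n. fadic_cong f n (a (Suc n)) (a n)) \<longrightarrow> (\<exists>s. \<forall>n. fadic_cong f n s (a n)))"

text \<open>The completion of R at t is lim R/t^n R = compl_carrier t / compl_null t, where a
  sequence c represents the element whose component in R/t^n R is c n. Both sets live in the
  pointwise ring nat \<Rightarrow> 'a; compl_carrier t is a subring and compl_null t an ideal of it.\<close>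
definition compl_carrier :: "'a::comm_ring_1 \<Rightarrow> (nat \<Rightarrow> 'a) set" where
  "compl_carrier t = {c. \<forall>n. t ^ n dvd (c (Suc n) - c n)}"

definition compl_null :: "'a::comm_ring_1 \<Rightarrow> (nat \<Rightarrow> 'a) set" where
  "compl_null t = {c. \<forall>n. t ^ n dvd c n}"

definition compl_embed :: "'a::comm_ring_1 fps \<Rightarrow> (nat \<Rightarrow> 'a) fps" where
  "compl_embed g = Abs_fps (\<lambda>i. (\<lambda>n. fps_nth g i))"

text \<open>R^[[X]] is represented by power series G with all coefficients in compl_carrier t,
  modulo those with all coefficients in compl_null t. The ideal (f) of R^[[X]] then
  corresponds to the following set: G represents an element of (f) in R^[[X]].\<close>
definition compl_ps_ideal :: "'a::comm_ring_1 \<Rightarrow> 'a fps \<Rightarrow> (nat \<Rightarrow> 'a) fps set" where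
  "compl_ps_ideal t f = {G. \<exists>H N. (\<forall>i. fps_nth H i \<in> compl_carrier t) \<and> (\<forall>i. fps_nth N i \<in> compl_null t)
                              \<and> G = N + compl_embed f * H}"

text \<open>The canonical R[[X]]-homomorphism R[[X]]/(f) \<rightarrow> R^_(f0)[[X]]/(f) is an isomorphism,
  i.e. bijective (it is a well-defined ring homomorphism by construction).\<close>
definition canon_map_iso :: "'a::comm_ring_1 fps \<Rightarrow> bool" where
  "canon_map_iso f \<longleftrightarrow>
     (\<forall>g. compl_embed g \<in> compl_ps_ideal (fps_nth f 0) f \<longrightarrow> f dvd g) \<and>
     (\<forall>G. (\<forall>i. fps_nth G i \<in> compl_carrier (fps_nth f 0)) \<longrightarrow>
          (\<exists>g. G - compl_embed g \<in> compl_ps_ideal (fps_nth f 0) f))"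

definition nonzerodivisor :: "'a::comm_ring_1 \<Rightarrow> bool" where
  "nonzerodivisor a \<longleftrightarrow> (\<forall>r. a * r = 0 \<longrightarrow> r = 0)"

definition is_ideal :: "'a::comm_ring_1 set \<Rightarrow> bool" where
  "is_ideal I \<longleftrightarrow> 0 \<in> I \<and> (\<forall>x\<in>I. \<forall>y\<in>I. x + y \<in> I) \<and> (\<forall>r. \<forall>x\<in>I. r * x \<in> I)"

definition noetherian :: "'a::comm_ring_1 itself \<Rightarrow> bool" where
  "noetherian _ \<longleftrightarrow> (\<forall>I::'a set. is_ideal I \<longrightarrow>
      (\<exists>F. finite F \<and> F \<subseteq> I \<and> (\<forall>x\<in>I. \<exists>c. x = (\<Sum>a\<in>F. c a * a))))"

end

(* The key point is that b = f\<^sub>0 - f has no constant term while f\<^sub>0 \<equiv> b modulo f. So a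
   series \<Sum> f\<^sub>0\<^sup>n d\<^sub>n, which need not converge, is congruent modulo f to \<Sum> b\<^sup>n d\<^sub>n, which
   converges X-adically; this yields limits of f\<^sub>0-adic Cauchy sequences in S = R[[X]]/(f)
   and an inverse of the canonical map into R^[[X]]/(f).

   Separatedness (and injectivity of the canonical map) reduces, via f\<^sub>0\<^sup>n \<equiv> b\<^sup>n \<in> X\<^sup>n R[[X]],
   to the closedness of (f) in the X-adic topology: \<Inter>\<^sub>n (X\<^sup>n, f) = (f). If f\<^sub>0 is a
   nonzerodivisor, quotients of g by f modulo X\<^sup>n are unique to order n and converge to an
   exact quotient. If R is Noetherian, so is R[[X]] (Hilbert's basis theorem), the colon
   ideals (f : X\<^sup>n) stabilise, and Nakayama's lemma, applicable since 1 - X r is always a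
   unit, shows that the intersection N satisfies N \<subseteq> X N + (f) and hence N = (f). *)

theory Submission
  imports Defs
begin

unbundle fps_syntax

section \<open>Series in powers of a series without constant term\<close>

text \<open>\<open>fps_powsum b e\<close> is \<open>\<Sum>\<^sub>k b\<^sup>k e\<^sub>k\<close>; for \<open>b $ 0 = 0\<close> only the terms \<open>k \<le> i\<close>
  contribute to the \<open>i\<close>-th coefficient.\<close>

definition fps_powsum :: "'a::comm_ring_1 fps \<Rightarrow> (nat \<Rightarrow> 'a fps) \<Rightarrow> 'a fps" where
  "fps_powsum b e = Abs_fps (\<lambda>i. \<Sum>k\<le>i. (b ^ k * e k) $ i)"

lemma fps_power_mult_nth_eq_0:
  fixes b :: "'a::comm_ring_1 fps"
  assumes "b $ 0 = 0" "j < k"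
  shows "(b ^ k * e) $ j = 0"
  unfolding fps_mult_nth using assms startsby_zero_power_prefix[OF assms(1)]
  by (intro sum.neutral) auto

lemma fps_powsum_nth:
  fixes b :: "'a::comm_ring_1 fps"
  assumes "b $ 0 = 0" "i \<le> n"
  shows "fps_powsum b e $ i = (\<Sum>k\<le>n. (b ^ k * e k) $ i)"
  unfolding fps_powsum_def using assms
  by (auto intro!: sum.mono_neutral_left fps_power_mult_nth_eq_0)

lemma fps_powsum_unfold:
  fixes b :: "'a::comm_ring_1 fps"
  assumes b0: "b $ 0 = 0"
  shows "fps_powsum b e = e 0 + b * fps_powsum b (\<lambda>k. e (Suc k))"
proof (rule fps_ext)
  fix i
  have "(b * fps_powsum b (\<lambda>k. e (Suc k))) $ i
        = (\<Sum>j=0..i. b $ j * (\<Sum>k\<le>i. (b ^ k * e (Suc k)) $ (i - j)))"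
    unfolding fps_mult_nth[of b]
    by (intro sum.cong refl) (use fps_powsum_nth[OF b0, of "i - _" i "\<lambda>k. e (Suc k)"] in simp)
  also have "\<dots> = (\<Sum>k\<le>i. (b ^ Suc k * e (Suc k)) $ i)"
    by (simp add: sum_distrib_left sum.swap[of _ "{0..i}"] fps_mult_nth mult.assoc)
  also have "\<dots> = fps_powsum b e $ i - e 0 $ i"
    by (simp add: fps_powsum_nth[OF b0, of i "Suc i"] sum.atMost_Suc_shift del: sum.atMost_Suc)
  finally show "fps_powsum b e $ i = (e 0 + b * fps_powsum b (\<lambda>k. e (Suc k))) $ i"
    by simp
qed

fun diff_quot :: "'a::comm_ring_1 \<Rightarrow> 'a \<Rightarrow> nat \<Rightarrow> 'a" where
  "diff_quot x y 0 = 0"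
| "diff_quot x y (Suc n) = x ^ n + y * diff_quot x y n"

lemma diff_quot_mult: "(x - y) * diff_quot x y n = x ^ n - y ^ n"
proof (induction n)
  case (Suc n)
  have "(x - y) * diff_quot x y (Suc n) = (x - y) * x ^ n + y * ((x - y) * diff_quot x y n)"
    by (simp add: algebra_simps)
  also have "\<dots> = x ^ Suc n - y ^ Suc n"
    by (simp only: Suc) (simp add: algebra_simps)
  finally show ?case .
qed simp

lemma fps_conv_X_mult:
  fixes b :: "'a::comm_ring_1 fps"
  assumes "b $ 0 = 0" shows "b = fps_X * fps_shift 1 b"
  by (rule fps_ext) (use assms in auto)

section \<open>Completeness of S and the canonical map\<close>

text \<open>With \<open>t = f $ 0\<close> and \<open>b = t - f\<close>, the limit is \<open>g = G\<^sub>0 + \<Sum>\<^sub>k b\<^sup>k d\<^sub>k\<close>; the tails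
  \<open>E\<^sub>n = \<Sum>\<^sub>k b\<^sup>k d\<^sub>n\<^sub>+\<^sub>k\<close> measure the error, and \<open>t\<^sup>k - b\<^sup>k = f \<cdot> diff_quot t b k\<close> gives \<open>H\<^sub>n\<close>.\<close>
lemma fadic_limit_of_increments:
  fixes f :: "'a::comm_ring_1 fps" and G d :: "nat \<Rightarrow> 'a fps"
  assumes Gd: "\<And>n. G (Suc n) - G n = fps_const ((f $ 0) ^ n) * d n"
  shows "\<exists>g H E. \<forall>n. G n - g = f * H n - fps_const ((f $ 0) ^ n) * E n \<and>
            H (Suc n) - H n = fps_const ((f $ 0) ^ n) * E (Suc n)"
proof -
  define T where "T = fps_const (f $ 0)"
  define b where "b = T - f"
  have b0: "b $ 0 = 0" by (simp add: b_def T_def)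
  have Tn: "fps_const ((f $ 0) ^ n) = T ^ n" for n by (simp add: T_def)
  define E where "E n = fps_powsum b (\<lambda>k. d (k + n))" for n
  have E_unfold: "E n = d n + b * E (Suc n)" for n
    unfolding E_def by (subst fps_powsum_unfold[OF b0]) simp
  define H where "H n = (\<Sum>k<n. diff_quot T b k * d k) + diff_quot T b n * E n" for n
  define g where "g = G 0 + E 0"
  have H_incr: "H (Suc n) - H n = T ^ n * E (Suc n)" for n
    by (simp add: H_def E_unfold[of n] algebra_simps)
  have G_g: "G n - g = f * H n - T ^ n * E n" for n
  proof (induction n)
    case 0 then show ?case by (simp add: g_def H_def)
  next
    case (Suc n)
    have "G (Suc n) - g = (G n - g) + T ^ n * d n" using Gd[of n] by (simp add: Tn algebra_simps)
    also have "\<dots> = f * H n - T ^ n * b * E (Suc n)" using Suc by (simp add: E_unfold[of n] algebra_simps)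
    also have "\<dots> = f * H (Suc n) - T ^ Suc n * E (Suc n)"
      using H_incr[of n] by (simp add: b_def algebra_simps)
    finally show ?case .
  qed
  show ?thesis by (intro exI[of _ g] exI[of _ H] exI[of _ E]) (simp add: G_g H_incr Tn)
qed

lemma fadic_cong_sym: "fadic_cong f k x y \<Longrightarrow> fadic_cong f k y x"
  unfolding fadic_cong_def
proof (elim exE)
  fix a b assume "x - y = fps_const ((f $ 0) ^ k) * a + f * b"
  then have "y - x = fps_const ((f $ 0) ^ k) * (- a) + f * (- b)"
    by (simp add: algebra_simps)
  then show "\<exists>a b. y - x = fps_const ((f $ 0) ^ k) * a + f * b" by blast
qed

lemma fadic_cong_trans: "fadic_cong f k x y \<Longrightarrow> fadic_cong f k y z \<Longrightarrow> fadic_cong f k x z"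
  unfolding fadic_cong_def
proof (elim exE)
  fix a b a' b'
  assume "x - y = fps_const ((f $ 0) ^ k) * a + f * b" "y - z = fps_const ((f $ 0) ^ k) * a' + f * b'"
  then have "x - z = fps_const ((f $ 0) ^ k) * (a + a') + f * (b + b')"
    by (simp add: algebra_simps)
  then show "\<exists>a b. x - z = fps_const ((f $ 0) ^ k) * a + f * b" by blast
qed

lemma fadic_compatible_has_limit:
  fixes f :: "'a::comm_ring_1 fps"
  assumes "\<forall>n. fadic_cong f n (a (Suc n)) (a n)"
  shows "\<exists>s. \<forall>n. fadic_cong f n s (a n)"
proof -
  from assms obtain d e where de: "\<And>n. a (Suc n) - a n = fps_const ((f $ 0) ^ n) * d n + f * e n"
    unfolding fadic_cong_def by metis
  define G where "G n = a n - f * (\<Sum>k<n. e k)" for n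
  have "G (Suc n) - G n = fps_const ((f $ 0) ^ n) * d n" for n
    using de[of n] by (simp add: G_def algebra_simps)
  from fadic_limit_of_increments[OF this] obtain g H E
    where gHE: "\<And>n. G n - g = f * H n - fps_const ((f $ 0) ^ n) * E n"
    by blast
  have "g - a n = fps_const ((f $ 0) ^ n) * E n + f * (- (H n + (\<Sum>k<n. e k)))" for n
    using gHE[of n] by (simp add: G_def algebra_simps)
  then show ?thesis unfolding fadic_cong_def by blast
qed

lemma fadic_Cauchy_imp_converges:
  fixes f :: "'a::comm_ring_1 fps"
  assumes "fadic_Cauchy f s"
  shows "fadic_converges f s"
proof -
  from assms obtain N where N: "\<And>k m n. m \<ge> N k \<Longrightarrow> n \<ge> N k \<Longrightarrow> fadic_cong f k (s m) (s n)"
    unfolding fadic_Cauchy_def by metis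
  define M where "M k = (\<Sum>j\<le>k. N j)" for k
  have MN: "N k \<le> M k" for k unfolding M_def by (rule member_le_sum) auto
  have M_mono: "M k \<le> M (Suc k)" for k unfolding M_def by (rule sum_mono2) auto
  have "fadic_cong f k (s (M (Suc k))) (s (M k))" for k
    by (intro N) (use MN[of k] M_mono[of k] in linarith)+
  then obtain l where l: "\<And>k. fadic_cong f k l (s (M k))"
    using fadic_compatible_has_limit[of f "\<lambda>k. s (M k)"] by blast
  have "fadic_cong f k (s n) l" if "n \<ge> M k" for k n
  proof -
    have "fadic_cong f k (s n) (s (M k))"
      by (intro N) (use MN[of k] that in linarith)+
    then show ?thesis using fadic_cong_sym[OF l[of k]] by (rule fadic_cong_trans)
  qed
  then show ?thesis unfolding fadic_converges_def by blast
qed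

lemma fps_const_dvd_coeffwise:
  fixes F :: "'a::comm_ring_1 fps"
  assumes "\<And>i. c dvd F $ i"
  shows "\<exists>A. F = fps_const c * A"
proof -
  have "\<forall>i. \<exists>a. F $ i = c * a" using assms by (auto simp: dvd_def)
  from choice[OF this] obtain a where "\<And>i. F $ i = c * a i" by blast
  then have "F = fps_const c * Abs_fps a" by (intro fps_ext) simp
  then show ?thesis by blast
qed

text \<open>Reduction \<open>R^[[X]] \<rightarrow> (R/t\<^sup>nR)[[X]]\<close>, on representatives.\<close>
definition compl_slice :: "nat \<Rightarrow> (nat \<Rightarrow> 'a) fps \<Rightarrow> 'a fps" where
  "compl_slice n G = Abs_fps (\<lambda>i. (G $ i) n)"

lemma compl_slice_eqI: "(\<And>n. compl_slice n G = compl_slice n G') \<Longrightarrow> G = G'"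
  unfolding compl_slice_def fps_eq_iff by (metis fps_nth_Abs_fps ext)

lemma sum_fun_apply: "(\<Sum>x\<in>A. F x) n = (\<Sum>x\<in>A. F x n)"
  by (induction A rule: infinite_finite_induct) auto

lemma compl_slice_add: "compl_slice n (G + G') = compl_slice n G + compl_slice n G'"
  and compl_slice_diff: "compl_slice n (G - G') = compl_slice n G - compl_slice n G'"
  and compl_slice_embed: "compl_slice n (compl_embed g) = g"
  and compl_slice_embed_mult: "compl_slice n (compl_embed g * H) = g * compl_slice n H"
  by (simp_all add: compl_slice_def compl_embed_def fps_eq_iff fps_mult_nth sum_fun_apply)

lemma canon_map_inj:
  fixes f :: "'a::comm_ring_1 fps"
  assumes "compl_embed g \<in> compl_ps_ideal (f $ 0) f"
  shows "fadic_cong f n g 0"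
proof -
  from assms obtain H N where N: "\<forall>i. N $ i \<in> compl_null (f $ 0)"
    and eq: "compl_embed g = N + compl_embed f * H"
    unfolding compl_ps_ideal_def by blast
  have "g = compl_slice n N + f * compl_slice n H"
    using arg_cong[OF eq, of "compl_slice n"] by (simp add: compl_slice_add compl_slice_embed compl_slice_embed_mult)
  moreover obtain A where "compl_slice n N = fps_const ((f $ 0) ^ n) * A"
    using N fps_const_dvd_coeffwise[of "(f $ 0) ^ n" "compl_slice n N"]
    by (auto simp: compl_slice_def compl_null_def)
  ultimately show ?thesis unfolding fadic_cong_def by (metis diff_zero)
qed

lemma canon_map_surj:
  fixes f :: "'a::comm_ring_1 fps"
  assumes G: "\<forall>i. G $ i \<in> compl_carrier (f $ 0)"
  shows "\<exists>g. G - compl_embed g \<in> compl_ps_ideal (f $ 0) f"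
proof -
  define S where "S n = compl_slice n G" for n
  have "\<forall>n. \<exists>D. S (Suc n) - S n = fps_const ((f $ 0) ^ n) * D"
    using G by (intro allI fps_const_dvd_coeffwise) (simp add: S_def compl_slice_def compl_carrier_def)
  from choice[OF this] obtain D where D: "\<And>n. S (Suc n) - S n = fps_const ((f $ 0) ^ n) * D n"
    by blast
  obtain g H E where
    gHE: "\<And>n. S n - g = f * H n - fps_const ((f $ 0) ^ n) * E n"
      and H_incr: "\<And>n. H (Suc n) - H n = fps_const ((f $ 0) ^ n) * E (Suc n)"
    using fadic_limit_of_increments[OF D] by blast
  define H' where "H' = Abs_fps (\<lambda>i n. H n $ i)"
  define N where "N = Abs_fps (\<lambda>i n. - ((f $ 0) ^ n * E n $ i))"
  have "G - compl_embed g = N + compl_embed f * H'"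
  proof (rule compl_slice_eqI)
    fix n
    have slices: "compl_slice n H' = H n" "compl_slice n N = - (fps_const ((f $ 0) ^ n) * E n)"
      by (simp_all add: compl_slice_def H'_def N_def fps_eq_iff)
    have "compl_slice n (G - compl_embed g) = f * H n - fps_const ((f $ 0) ^ n) * E n"
      using gHE[of n] by (simp add: S_def compl_slice_diff compl_slice_embed)
    also have "\<dots> = compl_slice n (N + compl_embed f * H')"
      using slices by (simp add: compl_slice_add compl_slice_embed_mult)
    finally show "compl_slice n (G - compl_embed g) = compl_slice n (N + compl_embed f * H')" .
  qed
  moreover have "H' $ i \<in> compl_carrier (f $ 0)" for i
  proof -
    have "(H' $ i) (Suc n) - (H' $ i) n = (f $ 0) ^ n * E (Suc n) $ i" for n
      using arg_cong[OF H_incr[of n], of "\<lambda>x. x $ i"] by (simp add: H'_def)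
    then show ?thesis unfolding compl_carrier_def by simp
  qed
  moreover have "N $ i \<in> compl_null (f $ 0)" for i
    unfolding compl_null_def N_def by simp
  ultimately have "G - compl_embed g \<in> compl_ps_ideal (f $ 0) f"
    unfolding compl_ps_ideal_def by blast
  then show ?thesis by (rule exI)
qed

section \<open>Closedness of the ideal (f): the nonzerodivisor case\<close>

definition X_power_ideal :: "'a::comm_ring_1 fps \<Rightarrow> nat \<Rightarrow> 'a fps set" where
  "X_power_ideal f n = {fps_X ^ n * a + f * b |a b. True}"

lemma X_power_ideal_iff: "g \<in> X_power_ideal f n \<longleftrightarrow> (\<exists>a b. g = fps_X ^ n * a + f * b)"
  by (simp add: X_power_ideal_def)

lemma fadic_cong_zero_imp_X_power_ideal:
  fixes f :: "'a::comm_ring_1 fps"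
  assumes "fadic_cong f n g 0"
  shows "g \<in> X_power_ideal f n"
proof -
  define T where "T = fps_const (f $ 0)"
  define b where "b = T - f"
  have b0: "b $ 0 = 0" by (simp add: b_def T_def)
  from assms obtain a c where g: "g = T ^ n * a + f * c"
    unfolding fadic_cong_def T_def by auto
  have "T ^ n = b ^ n + f * diff_quot T b n"
    using diff_quot_mult[of T b n] by (simp add: b_def algebra_simps)
  also have "b ^ n = fps_X ^ n * fps_shift 1 b ^ n"
    by (subst fps_conv_X_mult[OF b0]) (simp add: power_mult_distrib)
  finally have "g = fps_X ^ n * (fps_shift 1 b ^ n * a) + f * (diff_quot T b n * a + c)"
    using g by (simp add: algebra_simps)
  then show ?thesis unfolding X_power_ideal_iff by blast
qed

lemma fps_mult_low_coeffs_eq_0: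
  fixes f h :: "'a::comm_ring_1 fps"
  assumes nz: "nonzerodivisor (f $ 0)" and z: "\<And>j. j < m \<Longrightarrow> (f * h) $ j = 0" and "j < m"
  shows "h $ j = 0"
  using \<open>j < m\<close>
proof (induction j rule: less_induct)
  case (less j)
  have "(f * h) $ j = f $ 0 * h $ j + (\<Sum>i=Suc 0..j. f $ i * h $ (j - i))"
    unfolding fps_mult_nth by (subst sum.atLeast_Suc_atMost) auto
  also have "(\<Sum>i=Suc 0..j. f $ i * h $ (j - i)) = 0"
    using less by (intro sum.neutral) auto
  finally have "f $ 0 * h $ j = 0" using z[OF less.prems] by simp
  then show ?case using nz unfolding nonzerodivisor_def by blast
qed

text \<open>A series that is divisible by \<open>f\<close> modulo every power of \<open>X\<close> has quotients
  that stabilise coefficientwise; their limit is an exact quotient.\<close>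
lemma dvd_if_in_X_power_ideals_nonzerodivisor:
  fixes f g :: "'a::comm_ring_1 fps"
  assumes nz: "nonzerodivisor (f $ 0)" and g: "\<And>n. g \<in> X_power_ideal f n"
  shows "f dvd g"
proof -
  have "\<forall>n. \<exists>B. \<exists>a. g = fps_X ^ n * a + f * B"
    using g unfolding X_power_ideal_iff by blast
  from choice[OF this] obtain B where B: "\<And>n. \<exists>a. g = fps_X ^ n * a + f * B n"
    by blast
  have stable: "B n $ j = B m $ j" if "j < m" "m \<le> n" for j m n
  proof -
    obtain a a' where "g = fps_X ^ m * a + f * B m" "g = fps_X ^ n * a' + f * B n"
      using B by blast
    then have "f * (B n - B m) = fps_X ^ m * a - fps_X ^ n * a'"
      by (simp add: algebra_simps)
    then have "(f * (B n - B m)) $ j' = 0" if "j' < m" for j'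
      using that \<open>m \<le> n\<close> by (simp add: fps_X_power_mult_nth)
    from fps_mult_low_coeffs_eq_0[OF nz this \<open>j < m\<close>] show ?thesis by simp
  qed
  define B' where "B' = Abs_fps (\<lambda>i. B (Suc i) $ i)"
  have "g $ i = (f * B') $ i" for i
  proof -
    have "(f * B') $ i = (\<Sum>j=0..i. f $ j * B (Suc i) $ (i - j))"
      unfolding fps_mult_nth
    proof (intro sum.cong refl)
      fix j assume "j \<in> {0..i}"
      then show "f $ j * B' $ (i - j) = f $ j * B (Suc i) $ (i - j)"
        using stable[of "i - j" "Suc (i - j)" "Suc i"] by (simp add: B'_def)
    qed
    also have "\<dots> = (f * B (Suc i)) $ i" by (simp add: fps_mult_nth)
    also have "\<dots> = g $ i"
    proof -
      obtain a where g: "g = fps_X ^ Suc i * a + f * B (Suc i)" using B by blast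
      have "(fps_X ^ Suc i * a) $ i = 0" by (simp only: fps_X_power_mult_nth) simp
      with g show ?thesis by (simp del: power_Suc)
    qed
    finally show ?thesis by simp
  qed
  then show ?thesis by (metis fps_ext dvd_triv_left)
qed

section \<open>Hilbert's basis theorem for power series\<close>

lemma is_ideal_zero: "is_ideal I \<Longrightarrow> 0 \<in> I"
  and is_ideal_add: "is_ideal I \<Longrightarrow> x \<in> I \<Longrightarrow> y \<in> I \<Longrightarrow> x + y \<in> I"
  and is_ideal_mult: "is_ideal I \<Longrightarrow> x \<in> I \<Longrightarrow> r * x \<in> I"
  by (simp_all add: is_ideal_def)

lemma is_ideal_diff: "is_ideal I \<Longrightarrow> x \<in> I \<Longrightarrow> y \<in> I \<Longrightarrow> x - y \<in> I"
  using is_ideal_add[of I x "(-1) * y"] is_ideal_mult[of I y "-1"] by simp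

lemma is_ideal_sum:
  assumes "is_ideal I" "finite F" "\<And>x. x \<in> F \<Longrightarrow> P x \<in> I"
  shows "(\<Sum>x\<in>F. P x) \<in> I"
  using assms(2,3) by (induction F rule: finite_induct) (auto intro: is_ideal_zero is_ideal_add assms(1))

lemma noetherian_chain_stabilizes:
  fixes L :: "nat \<Rightarrow> 'a::comm_ring_1 set"
  assumes noeth: "noetherian TYPE('a)" and ideal: "\<And>k. is_ideal (L k)"
    and mono: "\<And>k. L k \<subseteq> L (Suc k)"
  obtains d where "\<And>k. L k \<subseteq> L d"
proof -
  have mono': "L i \<subseteq> L j" if "i \<le> j" for i j using lift_Suc_mono_le[of L] mono that by blast
  have "is_ideal (\<Union>k. L k)" unfolding is_ideal_def
  proof (intro conjI ballI allI)
    show "0 \<in> (\<Union>k. L k)" using is_ideal_zero[OF ideal] by blast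
  next
    fix x y assume "x \<in> (\<Union>k. L k)" "y \<in> (\<Union>k. L k)"
    then obtain i j where "x \<in> L i" "y \<in> L j" by blast
    then have "x \<in> L (max i j)" "y \<in> L (max i j)"
      using mono'[of i "max i j"] mono'[of j "max i j"] by auto
    then have "x + y \<in> L (max i j)" by (rule is_ideal_add[OF ideal])
    then show "x + y \<in> (\<Union>k. L k)" by blast
  next
    fix r x assume "x \<in> (\<Union>k. L k)"
    then obtain k where "x \<in> L k" by blast
    then have "r * x \<in> L k" by (rule is_ideal_mult[OF ideal])
    then show "r * x \<in> (\<Union>k. L k)" by blast
  qed
  from noeth[unfolded noetherian_def, rule_format, OF this] obtain F
    where F: "finite F" "F \<subseteq> (\<Union>k. L k)" "\<forall>x\<in>(\<Union>k. L k). \<exists>c. x = (\<Sum>a\<in>F. c a * a)"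
    by blast
  have "\<forall>a\<in>F. \<exists>k. a \<in> L k" using F(2) by blast
  from bchoice[OF this] obtain level where level: "\<And>a. a \<in> F \<Longrightarrow> a \<in> L (level a)"
    by blast
  define d where "d = (\<Sum>a\<in>F. level a)"
  have F_d: "a \<in> L d" if "a \<in> F" for a
    using level[OF that] mono'[OF member_le_sum[OF that _ F(1)]] unfolding d_def by blast
  have "L k \<subseteq> L d" for k
  proof
    fix x assume "x \<in> L k"
    then obtain c where "x = (\<Sum>a\<in>F. c a * a)" using F(3) by blast
    then show "x \<in> L d" using is_ideal_sum[OF ideal F(1)] is_ideal_mult[OF ideal F_d] by simp
  qed
  then show ?thesis by (rule that)
qed

definition initial_coeffs :: "'a::comm_ring_1 fps set \<Rightarrow> nat \<Rightarrow> 'a set" where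
  "initial_coeffs I k = {h $ k |h. h \<in> I \<and> (\<forall>j<k. h $ j = 0)}"

lemma is_ideal_initial_coeffs:
  assumes "is_ideal I"
  shows "is_ideal (initial_coeffs I k)"
  unfolding is_ideal_def
proof (intro conjI ballI allI)
  show "0 \<in> initial_coeffs I k"
    unfolding initial_coeffs_def using is_ideal_zero[OF assms] by (intro CollectI exI[of _ 0]) simp
next
  fix x y assume "x \<in> initial_coeffs I k" "y \<in> initial_coeffs I k"
  then obtain h h' where "h \<in> I" "\<forall>j<k. h $ j = 0" "x = h $ k" "h' \<in> I" "\<forall>j<k. h' $ j = 0" "y = h' $ k"
    unfolding initial_coeffs_def by blast
  then show "x + y \<in> initial_coeffs I k"
    unfolding initial_coeffs_def using is_ideal_add[OF assms, of h h']
    by (intro CollectI exI[of _ "h + h'"]) simp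
next
  fix r x assume "x \<in> initial_coeffs I k"
  then obtain h where "h \<in> I" "\<forall>j<k. h $ j = 0" "x = h $ k"
    unfolding initial_coeffs_def by blast
  then show "r * x \<in> initial_coeffs I k"
    unfolding initial_coeffs_def using is_ideal_mult[OF assms, of h "fps_const r"]
    by (intro CollectI exI[of _ "fps_const r * h"]) simp
qed

lemma initial_coeffs_mono:
  assumes "is_ideal I"
  shows "initial_coeffs I k \<subseteq> initial_coeffs I (Suc k)"
proof
  fix x assume "x \<in> initial_coeffs I k"
  then obtain h where h: "h \<in> I" "\<forall>j<k. h $ j = 0" "x = h $ k"
    unfolding initial_coeffs_def by blast
  have "\<forall>j<Suc k. (fps_X * h) $ j = 0" using h(2) by auto
  then show "x \<in> initial_coeffs I (Suc k)"
    unfolding initial_coeffs_def using is_ideal_mult[OF assms h(1), of fps_X] h(3)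
    by (intro CollectI exI[of _ "fps_X * h"]) simp
qed

lemma fps_const_X_power_mult_nth:
  "(fps_const c * fps_X ^ e * g) $ j = c * (if j < e then 0 else g $ (j - e))"
  by (simp add: mult.assoc fps_X_power_mult_nth del: fps_X_power_nth)

lemma fps_cancel_initial_coeff:
  fixes gen :: "'i \<Rightarrow> 'a::comm_ring_1 fps"
  assumes gen: "\<And>i j. i \<in> Ix \<Longrightarrow> j < lv i \<Longrightarrow> gen i $ j = 0"
    and c: "\<And>i. i \<in> Ix \<Longrightarrow> k < lv i \<Longrightarrow> c i = 0"
    and low: "\<forall>j<k. x $ j = 0" and top: "x $ k = (\<Sum>i\<in>Ix. c i * gen i $ lv i)"
  shows "\<forall>j<Suc k. (x - (\<Sum>i\<in>Ix. fps_const (c i) * fps_X ^ (k - lv i) * gen i)) $ j = 0"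
proof -
  have "(fps_const (c i) * fps_X ^ (k - lv i) * gen i) $ j = (if j = k then c i * gen i $ lv i else 0)"
    if "i \<in> Ix" "j \<le> k" for i j
    using gen[OF that(1), of "j - (k - lv i)"] c[OF that(1)] that(2)
    by (cases "k < lv i") (auto simp: fps_const_X_power_mult_nth)
  then have "(\<Sum>i\<in>Ix. fps_const (c i) * fps_X ^ (k - lv i) * gen i) $ j = (if j = k then x $ k else 0)"
    if "j \<le> k" for j
    using that unfolding fps_sum_nth top by (auto intro!: sum.neutral)
  then show ?thesis using low by (auto simp: less_Suc_eq)
qed

text \<open>Summing the corrections of all steps: the total coefficient of \<open>gen i\<close> is the power
  series whose \<open>j\<close>-th coefficient was produced at step \<open>lv i + j\<close>.\<close>
lemma fps_sum_corrections_nth: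
  fixes gen :: "'i \<Rightarrow> 'a::comm_ring_1 fps"
  assumes gen: "\<And>i j. i \<in> Ix \<Longrightarrow> j < lv i \<Longrightarrow> gen i $ j = 0"
    and c: "\<And>i k. i \<in> Ix \<Longrightarrow> k < lv i \<Longrightarrow> c k i = 0"
  shows "(\<Sum>k\<le>m. \<Sum>i\<in>Ix. fps_const (c k i) * fps_X ^ (k - lv i) * gen i) $ m
           = (\<Sum>i\<in>Ix. Abs_fps (\<lambda>j. c (lv i + j) i) * gen i) $ m"
proof -
  define P where "P i = (\<Sum>k\<le>m. fps_const (c k i) * fps_X ^ (k - lv i))" for i
  have P_nth: "P i $ j = c (lv i + j) i" if "i \<in> Ix" "j + lv i \<le> m" for i j
  proof -
    have "P i $ j = (\<Sum>k\<le>m. if k = j + lv i then c k i else 0)"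
      unfolding P_def fps_sum_nth
      by (intro sum.cong refl) (use c[OF that(1)] in \<open>auto simp: not_less\<close>)
    then show ?thesis using that(2) by (simp add: add.commute)
  qed
  have "(P i * gen i) $ m = (Abs_fps (\<lambda>j. c (lv i + j) i) * gen i) $ m" if "i \<in> Ix" for i
    unfolding fps_mult_nth
  proof (intro sum.cong refl)
    fix j assume "j \<in> {0..m}"
    then show "P i $ j * gen i $ (m - j) = Abs_fps (\<lambda>j. c (lv i + j) i) $ j * gen i $ (m - j)"
      using P_nth[OF that, of j] gen[OF that, of "m - j"] by (cases "j + lv i \<le> m") auto
  qed
  moreover have "(\<Sum>k\<le>m. \<Sum>i\<in>Ix. fps_const (c k i) * fps_X ^ (k - lv i) * gen i) = (\<Sum>i\<in>Ix. P i * gen i)"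
    unfolding P_def sum_distrib_right by (rule sum.swap)
  ultimately show ?thesis by (simp add: fps_sum_nth)
qed

text \<open>Division algorithm: the quotients are built coefficient by coefficient, step \<open>k\<close>
  cancelling the \<open>k\<close>-th coefficient of the remainder \<open>r k\<close>.\<close>
lemma fps_ideal_generated_by_initial_coeffs:
  fixes I :: "'a::comm_ring_1 fps set" and gen :: "'i \<Rightarrow> 'a fps"
  assumes I: "is_ideal I" and fin: "finite Ix" and gen_I: "\<And>i. i \<in> Ix \<Longrightarrow> gen i \<in> I"
    and gen: "\<And>i j. i \<in> Ix \<Longrightarrow> j < lv i \<Longrightarrow> gen i $ j = 0"
    and initial: "\<And>k h. h \<in> I \<Longrightarrow> \<forall>j<k. h $ j = 0 \<Longrightarrow>
       \<exists>c. (\<forall>i\<in>Ix. k < lv i \<longrightarrow> c i = 0) \<and> h $ k = (\<Sum>i\<in>Ix. c i * gen i $ lv i)"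
    and h: "h \<in> I"
  shows "\<exists>C. h = (\<Sum>i\<in>Ix. C i * gen i)"
proof -
  define corr where "corr k c = (\<Sum>i\<in>Ix. fps_const (c i) * fps_X ^ (k - lv i) * gen i)" for k c
  define cf where "cf k x = (SOME c. (\<forall>i\<in>Ix. k < lv i \<longrightarrow> c i = 0) \<and>
                                    x $ k = (\<Sum>i\<in>Ix. c i * gen i $ lv i))" for k x
  define r where "r = rec_nat h (\<lambda>k x. x - corr k (cf k x))"
  have r_0: "r 0 = h" and r_Suc: "r (Suc k) = r k - corr k (cf k (r k))" for k
    by (simp_all add: r_def)
  have cf: "(\<forall>i\<in>Ix. k < lv i \<longrightarrow> cf k x i = 0) \<and> x $ k = (\<Sum>i\<in>Ix. cf k x i * gen i $ lv i)"
    if "x \<in> I" "\<forall>j<k. x $ j = 0" for k x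
    unfolding cf_def by (rule someI_ex[OF initial[OF that]])
  have corr_I: "corr k c \<in> I" for k c
    unfolding corr_def by (intro is_ideal_sum[OF I fin] is_ideal_mult[OF I] gen_I)
  have r: "r k \<in> I \<and> (\<forall>j<k. r k $ j = 0)" for k
  proof (induction k)
    case 0 then show ?case using h r_0 by simp
  next
    case (Suc k)
    then have "r (Suc k) \<in> I" unfolding r_Suc using is_ideal_diff[OF I _ corr_I] by blast
    moreover have "\<forall>j<Suc k. r (Suc k) $ j = 0"
      unfolding r_Suc corr_def using Suc cf[of "r k" k]
      by (intro fps_cancel_initial_coeff[OF gen]) blast+
    ultimately show ?case by blast
  qed
  have cf_0: "cf k (r k) i = 0" if "i \<in> Ix" "k < lv i" for k i
    using cf[of "r k" k] r[of k] that by blast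
  have expand: "h = r (Suc m) + (\<Sum>k\<le>m. corr k (cf k (r k)))" for m
    by (induction m) (simp_all add: r_0 r_Suc)
  define C where "C i = Abs_fps (\<lambda>j. cf (lv i + j) (r (lv i + j)) i)" for i
  have "h $ m = (\<Sum>i\<in>Ix. C i * gen i) $ m" for m
  proof -
    have "h $ m = (\<Sum>k\<le>m. corr k (cf k (r k))) $ m"
      using arg_cong[OF expand[of m], of "\<lambda>x. x $ m"] r[of "Suc m"] by simp
    also have "\<dots> = (\<Sum>i\<in>Ix. C i * gen i) $ m"
      unfolding corr_def C_def by (rule fps_sum_corrections_nth[OF gen cf_0])
    finally show ?thesis .
  qed
  then show ?thesis by (blast intro: fps_ext)
qed

lemma sum_lincomb_image:
  fixes w :: "'i \<Rightarrow> 'a::comm_semiring_1"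
  assumes "finite Ix"
  shows "\<exists>c. (\<Sum>i\<in>Ix. C i * w i) = (\<Sum>y\<in>w ` Ix. c y * y)"
proof -
  have "(\<Sum>i\<in>Ix. C i * w i) = (\<Sum>y\<in>w ` Ix. \<Sum>i\<in>{i\<in>Ix. w i = y}. C i * w i)"
    by (rule sum.image_gen[OF assms])
  also have "\<dots> = (\<Sum>y\<in>w ` Ix. (\<Sum>i\<in>{i\<in>Ix. w i = y}. C i) * y)"
    by (intro sum.cong refl) (simp add: sum_distrib_right)
  finally show ?thesis by (rule exI[of _ "\<lambda>y. \<Sum>i\<in>{i\<in>Ix. w i = y}. C i"])
qed

text \<open>The finitely many generators of the ideals of initial coefficients of order \<open>k \<le> d\<close>,
  where the chain of these ideals stabilises at \<open>d\<close>, lifted to elements of \<open>I\<close>.\<close>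
lemma initial_coeffs_finite_lifts:
  fixes I :: "'a::comm_ring_1 fps set"
  assumes noeth: "noetherian TYPE('a)" and I: "is_ideal I"
  obtains Ix :: "(nat \<times> 'a) set" and gen :: "nat \<times> 'a \<Rightarrow> 'a fps"
  where "finite Ix" "\<And>i. i \<in> Ix \<Longrightarrow> gen i \<in> I"
    "\<And>i j. i \<in> Ix \<Longrightarrow> j < fst i \<Longrightarrow> gen i $ j = 0"
    "\<And>k h. h \<in> I \<Longrightarrow> \<forall>j<k. h $ j = 0 \<Longrightarrow>
       \<exists>c. (\<forall>i\<in>Ix. k < fst i \<longrightarrow> c i = 0) \<and> h $ k = (\<Sum>i\<in>Ix. c i * gen i $ fst i)"
proof -
  let ?L = "initial_coeffs I"
  obtain d where d: "\<And>k. ?L k \<subseteq> ?L d"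
    using noetherian_chain_stabilizes[of "initial_coeffs I", OF noeth] is_ideal_initial_coeffs[OF I]
      initial_coeffs_mono[OF I] by blast
  have "\<forall>k. \<exists>F. finite F \<and> F \<subseteq> ?L k \<and> (\<forall>x\<in>?L k. \<exists>c. x = (\<Sum>a\<in>F. c a * a))"
    by (intro allI noeth[unfolded noetherian_def, rule_format] is_ideal_initial_coeffs[OF I])
  from choice[OF this] obtain F
    where F_all: "\<forall>k. finite (F k) \<and> F k \<subseteq> ?L k \<and> (\<forall>x\<in>?L k. \<exists>c. x = (\<Sum>a\<in>F k. c a * a))" ..
  then have F: "\<And>k. finite (F k)" "\<And>k. F k \<subseteq> ?L k"
    "\<And>k x. x \<in> ?L k \<Longrightarrow> \<exists>c. x = (\<Sum>a\<in>F k. c a * a)"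
    by simp_all
  define lift where "lift k a = (SOME h. h \<in> I \<and> (\<forall>j<k. h $ j = 0) \<and> h $ k = a)" for k a
  have lift: "lift k a \<in> I \<and> (\<forall>j<k. lift k a $ j = 0) \<and> lift k a $ k = a" if "a \<in> ?L k" for k a
    unfolding lift_def by (rule someI_ex) (use that in \<open>auto simp: initial_coeffs_def\<close>)
  define Ix where "Ix = Sigma {..d} F"
  define gen where "gen i = lift (fst i) (snd i)" for i
  have Ix_L: "snd i \<in> ?L (fst i)" if "i \<in> Ix" for i
    using that F(2) unfolding Ix_def by (cases i) auto
  have fin: "finite Ix" unfolding Ix_def using F(1) by auto
  have gen_I: "gen i \<in> I" and gen: "\<And>j. j < fst i \<Longrightarrow> gen i $ j = 0" if "i \<in> Ix" for i
    using lift[OF Ix_L[OF that]] unfolding gen_def by auto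
  have initial: "\<exists>c. (\<forall>i\<in>Ix. k < fst i \<longrightarrow> c i = 0) \<and> h $ k = (\<Sum>i\<in>Ix. c i * gen i $ fst i)"
    if "h \<in> I" "\<forall>j<k. h $ j = 0" for k h
  proof -
    define k' where "k' = min k d"
    have "h $ k \<in> ?L k" unfolding initial_coeffs_def using that by blast
    then have "h $ k \<in> ?L k'" using d[of k] by (cases "k \<le> d") (auto simp: k'_def)
    then obtain a where a: "h $ k = (\<Sum>b\<in>F k'. a b * b)" using F(3) by blast
    define c where "c i = (if fst i = k' then a (snd i) else 0)" for i
    have "(\<Sum>i\<in>Ix. c i * gen i $ fst i) = (\<Sum>k''\<le>d. \<Sum>b\<in>F k''. c (k'', b) * gen (k'', b) $ k'')"
      unfolding Ix_def using F(1) by (subst sum.Sigma) (auto simp: split_beta)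
    also have "\<dots> = (\<Sum>k''\<le>d. if k'' = k' then \<Sum>b\<in>F k'. a b * gen (k', b) $ k' else 0)"
      by (intro sum.cong refl) (simp add: c_def)
    also have "\<dots> = (\<Sum>b\<in>F k'. a b * gen (k', b) $ k')"
      by (simp add: k'_def)
    also have "\<dots> = h $ k"
      unfolding a
    proof (intro sum.cong refl)
      fix b assume "b \<in> F k'"
      then have "b \<in> ?L k'" using F(2) by blast
      then show "a b * gen (k', b) $ k' = a b * b" using lift[of b k'] by (simp add: gen_def)
    qed
    moreover have "\<forall>i\<in>Ix. k < fst i \<longrightarrow> c i = 0" by (simp add: c_def k'_def)
    ultimately show ?thesis by (intro exI[of _ c]) simp
  qed
  from fin gen_I gen initial show ?thesis by (rule that)
qed

theorem noetherian_fps: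
  assumes noeth: "noetherian TYPE('a::comm_ring_1)"
  shows "noetherian TYPE('a fps)"
  unfolding noetherian_def
proof (intro allI impI)
  fix I :: "'a fps set" assume I: "is_ideal I"
  show "\<exists>G. finite G \<and> G \<subseteq> I \<and> (\<forall>x\<in>I. \<exists>c. x = (\<Sum>a\<in>G. c a * a))"
  proof (rule initial_coeffs_finite_lifts[OF noeth I])
    fix Ix gen assume fin: "finite Ix" and gen_I: "\<And>i. i \<in> Ix \<Longrightarrow> gen i \<in> I"
      and gen: "\<And>i j. i \<in> Ix \<Longrightarrow> j < fst i \<Longrightarrow> gen i $ j = 0"
      and initial: "\<And>k h. h \<in> I \<Longrightarrow> \<forall>j<k. h $ j = 0 \<Longrightarrow>
         \<exists>c. (\<forall>i\<in>Ix. k < fst i \<longrightarrow> c i = 0) \<and> h $ k = (\<Sum>i\<in>Ix. c i * gen i $ fst i)"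
    have "\<exists>c. x = (\<Sum>a\<in>gen ` Ix. c a * a)" if x: "x \<in> I" for x
    proof -
      obtain C where "x = (\<Sum>i\<in>Ix. C i * gen i)"
        using fps_ideal_generated_by_initial_coeffs[OF I fin gen_I gen initial x] by blast
      then show ?thesis using sum_lincomb_image[OF fin, of C gen] by simp
    qed
    moreover have "finite (gen ` Ix)" "gen ` Ix \<subseteq> I" using fin gen_I by auto
    ultimately show ?thesis by blast
  qed
qed

section \<open>Closedness of the ideal (f): the Noetherian case\<close>

lemma lincomb_remove_generator:
  fixes u :: "'a::comm_ring_1"
  assumes fin: "finite F" and u: "u \<notin> F"
    and u_span: "u = (\<Sum>a\<in>F. e a * a) + f * \<gamma>"
    and y: "y = (\<Sum>a\<in>insert u F. d a * a) + f * \<beta>"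
  shows "\<exists>c \<beta>'. y = (\<Sum>a\<in>F. c a * a) + f * \<beta>'"
proof -
  have "d u * u = d u * ((\<Sum>a\<in>F. e a * a) + f * \<gamma>)" using u_span by simp
  then have du: "d u * u = (\<Sum>a\<in>F. (d u * e a) * a) + f * (d u * \<gamma>)"
    by (simp add: algebra_simps sum_distrib_left)
  have "y = d u * u + (\<Sum>a\<in>F. d a * a) + f * \<beta>" using y fin u by simp
  also have "\<dots> = (\<Sum>a\<in>F. (d u * e a + d a) * a) + f * (\<beta> + d u * \<gamma>)"
    unfolding du by (simp add: algebra_simps sum.distrib)
  finally show ?thesis by (intro exI[of _ "\<lambda>a. d u * e a + d a"] exI)
qed

text \<open>Each generator \<open>u\<close> satisfies \<open>(1 - x r) u \<in> x \<langle>F - {u}\<rangle> + (f)\<close> for some \<open>r\<close>,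
  so it can be dropped.\<close>
lemma nakayama_principal:
  fixes x f :: "'a::comm_ring_1"
  assumes unit: "\<And>r. \<exists>v. v * (1 - x * r) = 1"
    and step: "\<forall>y\<in>N. \<exists>w\<in>N. \<exists>\<beta>. y = x * w + f * \<beta>"
    and fin: "finite F" and F: "F \<subseteq> N"
    and span: "\<forall>y\<in>N. \<exists>c \<beta>. y = (\<Sum>a\<in>F. c a * a) + f * \<beta>"
  shows "\<forall>y\<in>N. f dvd y"
  using fin F span
proof (induction F rule: finite_induct)
  case empty
  then show ?case by auto
next
  case (insert u F)
  obtain w \<beta> where w: "w \<in> N" and u: "u = x * w + f * \<beta>"
    using step insert.prems(1) by blast
  obtain c \<gamma> where "w = (\<Sum>a\<in>insert u F. c a * a) + f * \<gamma>"
    using insert.prems(2) w by blast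
  then have w_split: "w = c u * u + (\<Sum>a\<in>F. c a * a) + f * \<gamma>" using insert.hyps by simp
  obtain v where v: "v * (1 - x * c u) = 1" using unit by blast
  have "u = x * (c u * u + (\<Sum>a\<in>F. c a * a) + f * \<gamma>) + f * \<beta>"
    by (subst w_split[symmetric]) (rule u)
  then have eq: "(1 - x * c u) * u = x * (\<Sum>a\<in>F. c a * a) + f * (x * \<gamma> + \<beta>)"
    by (simp add: algebra_simps)
  have "u = v * ((1 - x * c u) * u)"
    by (simp only: mult.assoc[symmetric] v mult_1)
  also note eq
  finally have u_span: "u = (\<Sum>a\<in>F. (v * x * c a) * a) + f * (v * (x * \<gamma> + \<beta>))"
    by (simp add: algebra_simps sum_distrib_left)
  have "\<forall>y\<in>N. \<exists>c \<beta>. y = (\<Sum>a\<in>F. c a * a) + f * \<beta>"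
  proof
    fix y assume "y \<in> N"
    then obtain d \<beta>' where "y = (\<Sum>a\<in>insert u F. d a * a) + f * \<beta>'"
      using insert.prems(2) by blast
    then show "\<exists>c \<beta>. y = (\<Sum>a\<in>F. c a * a) + f * \<beta>"
      by (rule lincomb_remove_generator[OF insert.hyps(1,2) u_span])
  qed
  then show ?case using insert.IH insert.prems(1) by blast
qed

lemma is_ideal_Inter_X_power_ideals: "is_ideal (\<Inter>n. X_power_ideal f n)"
  unfolding is_ideal_def
proof (intro conjI ballI allI)
  have "0 \<in> X_power_ideal f n" for n
    unfolding X_power_ideal_iff by (intro exI[of _ 0]) simp
  then show "0 \<in> (\<Inter>n. X_power_ideal f n)" by blast
next
  fix x y assume x: "x \<in> (\<Inter>n. X_power_ideal f n)" and y: "y \<in> (\<Inter>n. X_power_ideal f n)"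
  have "x + y \<in> X_power_ideal f n" for n
  proof -
    from x y have "x \<in> X_power_ideal f n" "y \<in> X_power_ideal f n" by blast+
    then obtain a b a' b' where "x = fps_X ^ n * a + f * b" "y = fps_X ^ n * a' + f * b'"
      unfolding X_power_ideal_iff by blast
    then have "x + y = fps_X ^ n * (a + a') + f * (b + b')" by (simp add: algebra_simps)
    then show ?thesis unfolding X_power_ideal_iff by blast
  qed
  then show "x + y \<in> (\<Inter>n. X_power_ideal f n)" by blast
next
  fix r x assume x: "x \<in> (\<Inter>n. X_power_ideal f n)"
  have "r * x \<in> X_power_ideal f n" for n
  proof -
    from x have "x \<in> X_power_ideal f n" by blast
    then obtain a b where "x = fps_X ^ n * a + f * b"
      unfolding X_power_ideal_iff by blast
    then have "r * x = fps_X ^ n * (r * a) + f * (r * b)" by (simp add: algebra_simps)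
    then show ?thesis unfolding X_power_ideal_iff by blast
  qed
  then show "r * x \<in> (\<Inter>n. X_power_ideal f n)" by blast
qed

text \<open>For \<open>y = X\<^sup>c\<^sup>+\<^sup>1 z + f \<beta>\<close> take \<open>w = X\<^sup>c z\<close>: comparing with \<open>y \<in> (X\<^sup>n\<^sup>+\<^sup>1, f)\<close> and
  cancelling \<open>X\<close> by the stability of the colon ideals gives \<open>w \<in> (X\<^sup>n, f)\<close>.\<close>
lemma Inter_X_power_ideals_subset_X_mult:
  fixes f :: "'a::comm_ring_1 fps"
  assumes stable: "\<And>h. f dvd fps_X ^ Suc c * h \<Longrightarrow> f dvd fps_X ^ c * h"
    and y: "y \<in> (\<Inter>n. X_power_ideal f n)"
  shows "\<exists>w\<in>(\<Inter>n. X_power_ideal f n). \<exists>\<beta>. y = fps_X * w + f * \<beta>"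
proof -
  from y have "y \<in> X_power_ideal f (Suc c)" by blast
  then obtain z \<beta> where yz: "y = fps_X ^ Suc c * z + f * \<beta>"
    unfolding X_power_ideal_iff by blast
  define w where "w = fps_X ^ c * z"
  have "w \<in> X_power_ideal f n" for n
  proof (cases "n \<le> c")
    case True
    then have "w = fps_X ^ n * (fps_X ^ (c - n) * z) + f * 0"
      by (simp add: w_def mult.assoc[symmetric] power_add[symmetric])
    then show ?thesis unfolding X_power_ideal_iff by blast
  next
    case False
    from y have "y \<in> X_power_ideal f (Suc n)" by blast
    then obtain z' \<beta>' where yz': "y = fps_X ^ Suc n * z' + f * \<beta>'"
      unfolding X_power_ideal_iff by blast
    have X_Suc: "fps_X ^ Suc c * fps_X ^ (n - c) = (fps_X ^ Suc n :: 'a fps)"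
      and X_n: "fps_X ^ c * fps_X ^ (n - c) = (fps_X ^ n :: 'a fps)"
      using False by (simp_all only: power_add[symmetric]) simp_all
    have "fps_X ^ Suc c * z - fps_X ^ Suc n * z' = (y - f * \<beta>) - (y - f * \<beta>')"
      by (subst (1) yz, subst yz') simp
    also have "\<dots> = f * (\<beta>' - \<beta>)" by (simp add: algebra_simps)
    finally have "fps_X ^ Suc c * (z - fps_X ^ (n - c) * z') = f * (\<beta>' - \<beta>)"
      by (simp only: right_diff_distrib mult.assoc[symmetric] X_Suc)
    then have "f dvd fps_X ^ c * (z - fps_X ^ (n - c) * z')"
      by (intro stable) simp
    then obtain \<gamma> where "fps_X ^ c * (z - fps_X ^ (n - c) * z') = f * \<gamma>" by (rule dvdE)
    then have "w - fps_X ^ n * z' = f * \<gamma>"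
      by (simp only: w_def right_diff_distrib mult.assoc[symmetric] X_n)
    then have "w = fps_X ^ n * z' + f * \<gamma>"
      by (simp add: diff_eq_eq add.commute)
    then show ?thesis unfolding X_power_ideal_iff by blast
  qed
  moreover have "y = fps_X * w + f * \<beta>" using yz by (simp add: w_def mult.assoc)
  ultimately show ?thesis by blast
qed

lemma dvd_if_in_X_power_ideals_noetherian:
  fixes f g :: "'a::comm_ring_1 fps"
  assumes noeth: "noetherian TYPE('a fps)" and g: "\<And>n. g \<in> X_power_ideal f n"
  shows "f dvd g"
proof -
  define N where "N = (\<Inter>n. X_power_ideal f n)"
  define K where "K n = {h. f dvd fps_X ^ n * h}" for n
  have "is_ideal (K n)" for n
    unfolding is_ideal_def K_def by (auto simp: distrib_left mult.left_commute[of _ r for r])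
  moreover have "K n \<subseteq> K (Suc n)" for n
    unfolding K_def by (auto simp: mult.assoc intro: dvd_mult)
  ultimately obtain c where "\<And>n. K n \<subseteq> K c"
    using noetherian_chain_stabilizes[of K, OF noeth] by blast
  then have stable: "f dvd fps_X ^ c * h" if "f dvd fps_X ^ Suc c * h" for h
    using that unfolding K_def by blast
  have step: "\<forall>y\<in>N. \<exists>w\<in>N. \<exists>\<beta>. y = fps_X * w + f * \<beta>"
  proof
    fix y assume "y \<in> N"
    then show "\<exists>w\<in>N. \<exists>\<beta>. y = fps_X * w + f * \<beta>"
      unfolding N_def by (rule Inter_X_power_ideals_subset_X_mult[rotated]) (rule stable)
  qed
  have "is_ideal N" unfolding N_def by (rule is_ideal_Inter_X_power_ideals)
  from noeth[unfolded noetherian_def, rule_format, OF this]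
  obtain F where F: "finite F" "F \<subseteq> N" "\<forall>y\<in>N. \<exists>c. y = (\<Sum>a\<in>F. c a * a)"
    by blast
  have span: "\<forall>y\<in>N. \<exists>c \<beta>. y = (\<Sum>a\<in>F. c a * a) + f * \<beta>"
  proof
    fix y assume "y \<in> N"
    then obtain c where "y = (\<Sum>a\<in>F. c a * a)" using F(3) by blast
    then show "\<exists>c \<beta>. y = (\<Sum>a\<in>F. c a * a) + f * \<beta>" by (intro exI[of _ c] exI[of _ 0]) simp
  qed
  have unit: "\<exists>v. v * (1 - fps_X * r) = 1" for r :: "'a fps"
    using fps_left_inverse[of 1 "1 - fps_X * r"] by auto
  have "g \<in> N" unfolding N_def using g by blast
  then show ?thesis using nakayama_principal[OF unit step F(1,2) span] by blast
qed

theorem lemma3p4: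
  fixes f :: "'a::comm_ring_1 fps"
  shows "(\<forall>s. fadic_Cauchy f s \<longrightarrow> fadic_converges f s) \<and>
         ((nonzerodivisor (fps_nth f 0) \<or> noetherian TYPE('a)) \<longrightarrow>
            fadic_complete f \<and> canon_map_iso f)"
proof (intro conjI allI impI)
  fix s assume "fadic_Cauchy f s"
  then show "fadic_converges f s" by (rule fadic_Cauchy_imp_converges)
next
  assume hyp: "nonzerodivisor (fps_nth f 0) \<or> noetherian TYPE('a)"
  have closed: "f dvd g" if "\<forall>n. fadic_cong f n g 0" for g
  proof -
    have "g \<in> X_power_ideal f n" for n
      using that fadic_cong_zero_imp_X_power_ideal by blast
    with hyp show ?thesis
      using dvd_if_in_X_power_ideals_nonzerodivisor dvd_if_in_X_power_ideals_noetherian[OF noetherian_fps]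
      by blast
  qed
  show "fadic_complete f"
    unfolding fadic_complete_def using closed fadic_compatible_has_limit by blast
  show "canon_map_iso f"
    unfolding canon_map_iso_def using closed canon_map_inj canon_map_surj by blast
qed

end
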